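(* Let $K$ be a compact Lie group with complexification $G=K_\mathbb{C}$, and let $Q$ be a quiver with a finite set of relations $R$. If $f_1,f_2\in\mathcal{F}_K(Q,R)$ lie in the same $\mathcal{G}_G(Q)$-orbit, then they lie in the same $\mathcal{G}_K(Q)$-orbit.
   Context: A quiver $Q=(Q_V,Q_A)$ is a finite directed graph; each arrow $a$ has head $h_a$ and tail $t_a$; relations are cycles $a_k\cdots a_1$ (paths with $h_{a_j}=t_{a_{j+1}}$ and $h_{a_k}=t_{a_1}$). For a group $H$, $\mathcal{F}_H(Q,R)$ is the set of maps $f:Q_A\to H$ with $f(a_k)\cdots f(a_1)=I$ for each cycle in $R$, and the gauge group $\mathcal{G}_H(Q)$ of maps $Q_V\to H$ acts by $(g\cdot f)(a)=g(h_a)f(a)g(t_a)^{-1}$. $K\subset G$ naturally, so $\mathcal{F}_K(Q,R)\subset\mathcal{F}_G(Q,R)$. *)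

theory Defs
  imports "HOL-Analysis.Analysis"
begin

primrec matpow :: "complex^'n^'n \<Rightarrow> nat \<Rightarrow> complex^'n^'n" where
  "matpow X 0 = mat 1"
| "matpow X (Suc k) = X ** matpow X k"

definition mexp :: "complex^'n^'n \<Rightarrow> complex^'n^'n" where
  "mexp X = (\<Sum>k. (1 / (fact k :: real)) *\<^sub>R matpow X k)"

definition cscale :: "complex \<Rightarrow> complex^'n^'n \<Rightarrow> complex^'n^'n" where
  "cscale c X = (\<chi> i j. c * X $ i $ j)"

text \<open>A compact (closed) subgroup of GL_n(C); by Cartan's closed subgroup theorem
  this is a compact Lie group, and every compact Lie group arises this way.\<close>
definition compact_matrix_group :: "(complex^'n^'n) set \<Rightarrow> bool" where
  "compact_matrix_group K \<longleftrightarrow> compact K \<and> mat 1 \<in> K \<and>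
     (\<forall>x\<in>K. invertible x \<and> matrix_inv x \<in> K) \<and>
     (\<forall>x\<in>K. \<forall>y\<in>K. x ** y \<in> K)"

definition lie_alg :: "(complex^'n^'n) set \<Rightarrow> (complex^'n^'n) set" where
  "lie_alg K = {X. \<forall>t::real. mexp (t *\<^sub>R X) \<in> K}"

text \<open>Complexification K_C = K exp(i k) (polar decomposition), realised inside GL_n(C).\<close>
definition complexification :: "(complex^'n^'n) set \<Rightarrow> (complex^'n^'n) set" where
  "complexification K = {k ** mexp (cscale \<i> X) | k X. k \<in> K \<and> X \<in> lie_alg K}"

definition quiver :: "'v set \<Rightarrow> 'e set \<Rightarrow> ('e \<Rightarrow> 'v) \<Rightarrow> ('e \<Rightarrow> 'v) \<Rightarrow> bool" where
  "quiver QV QA hh tt \<longleftrightarrow> finite QV \<and> finite QA \<and> (\<forall>a\<in>QA. hh a \<in> QV \<and> tt a \<in> QV)"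

text \<open>A cycle a_k ... a_1 is represented by the list [a_1, ..., a_k].\<close>
definition is_cycle :: "'e set \<Rightarrow> ('e \<Rightarrow> 'v) \<Rightarrow> ('e \<Rightarrow> 'v) \<Rightarrow> 'e list \<Rightarrow> bool" where
  "is_cycle QA hh tt as \<longleftrightarrow> as \<noteq> [] \<and> set as \<subseteq> QA \<and>
     (\<forall>j. Suc j < length as \<longrightarrow> hh (as ! j) = tt (as ! Suc j)) \<and>
     hh (last as) = tt (as ! 0)"

text \<open>f(a_k) ... f(a_1) for the list [a_1,...,a_k].\<close>
definition path_prod :: "('e \<Rightarrow> complex^'n^'n) \<Rightarrow> 'e list \<Rightarrow> complex^'n^'n" where
  "path_prod f as = foldl (\<lambda>acc a. f a ** acc) (mat 1) as"

definition reps :: "(complex^'n^'n) set \<Rightarrow> 'e set \<Rightarrow> 'e list set \<Rightarrow> ('e \<Rightarrow> complex^'n^'n) set"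
  where "reps H QA R = {f. f \<in> QA \<rightarrow>\<^sub>E H \<and> (\<forall>r\<in>R. path_prod f r = mat 1)}"

definition gauge :: "(complex^'n^'n) set \<Rightarrow> 'v set \<Rightarrow> ('v \<Rightarrow> complex^'n^'n) set" where
  "gauge H QV = QV \<rightarrow>\<^sub>E H"

definition gauge_act :: "'e set \<Rightarrow> ('e \<Rightarrow> 'v) \<Rightarrow> ('e \<Rightarrow> 'v) \<Rightarrow> ('v \<Rightarrow> complex^'n^'n)
    \<Rightarrow> ('e \<Rightarrow> complex^'n^'n) \<Rightarrow> ('e \<Rightarrow> complex^'n^'n)" where
  "gauge_act QA hh tt g f = (\<lambda>a\<in>QA. g (hh a) ** f a ** matrix_inv (g (tt a)))"

end

theory Submission
  imports Defs
begin

text \<open>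
  Average the matrices k k^* over k in K: the point of their convex hull minimising the strictly
  convex, K-invariant function M \<mapsto> max (k \<in> K) |k M k^*| is unique, hence fixed by K, and is a
  positive definite H with k H k^* = H for all k in K. For X in the Lie algebra, i X is then
  self-adjoint for the form given by H, and the exponential is injective on such matrices (from
  e^P = e^Q a convexity argument gives e^(P/2) = e^(Q/2); iterating and differentiating at 0 forces
  P = Q). So the polar decomposition k exp (i X) is unique. If g moves f1 to f2 with
  g v = k_v exp (i X_v), uniqueness of the polar decomposition of f2 a g (t a) = g (h a) f1 a on
  each arrow a shows that the unitary parts k_v alone already move f1 to f2.
\<close>

section \<open>Complex matrices as a Banach algebra\<close>

text \<open>The type complex^'n^'n is no instance of real_normed_algebra_1. Its copy cmat, with the
  matrix product and the maximal absolute row sum norm, is a Banach algebra, so the library's exp is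
  available on it; it agrees with mexp.\<close>

typedef ('n::finite) cmat = "UNIV :: (complex^'n^'n) set"
  morphisms Rep_cmat Abs_cmat by auto

setup_lifting type_definition_cmat

definition abs_row_sum :: "complex^'n^'n \<Rightarrow> 'n::finite \<Rightarrow> real" where
  "abs_row_sum A i = (\<Sum>j\<in>UNIV. cmod (A$i$j))"

definition row_sum_norm :: "complex^'n^'n::finite \<Rightarrow> real" where
  "row_sum_norm A = Max (range (abs_row_sum A))"

lemma abs_row_sum_le_row_sum_norm: "abs_row_sum A i \<le> row_sum_norm A"
  unfolding row_sum_norm_def by (rule Max_ge) auto

lemma row_sum_norm_le: "(\<And>i. abs_row_sum A i \<le> c) \<Longrightarrow> row_sum_norm A \<le> c"
  unfolding row_sum_norm_def by (subst Max_le_iff) auto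

lemma row_sum_norm_attained: "\<exists>i. row_sum_norm A = abs_row_sum A i"
proof -
  have "row_sum_norm A \<in> range (abs_row_sum A)"
    unfolding row_sum_norm_def by (rule Max_in) auto
  then show ?thesis by auto
qed

lemma entry_le_row_sum_norm: "cmod (A$i$j) \<le> row_sum_norm (A::complex^'n^'n::finite)"
proof -
  have "cmod (A$i$j) \<le> abs_row_sum A i"
    unfolding abs_row_sum_def by (intro member_le_sum) auto
  then show ?thesis using abs_row_sum_le_row_sum_norm order_trans by blast
qed

lemma row_sum_norm_nonneg: "0 \<le> row_sum_norm A"
  using entry_le_row_sum_norm[of A] norm_ge_zero order_trans by blast

lemma row_sum_norm_eq_0: "row_sum_norm A = 0 \<longleftrightarrow> A = 0"
proof
  assume "row_sum_norm A = 0"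
  then show "A = 0" using entry_le_row_sum_norm[of A] by (simp add: vec_eq_iff)
next
  assume "A = 0"
  then show "row_sum_norm A = 0"
    by (intro antisym row_sum_norm_le row_sum_norm_nonneg) (simp add: abs_row_sum_def)
qed

lemma row_sum_norm_triangle: "row_sum_norm (A + B) \<le> row_sum_norm A + row_sum_norm B"
proof (rule row_sum_norm_le)
  fix i
  have "abs_row_sum (A + B) i \<le> abs_row_sum A i + abs_row_sum B i"
    unfolding abs_row_sum_def sum.distrib[symmetric]
    by (intro sum_mono) (simp add: norm_triangle_ineq)
  then show "abs_row_sum (A + B) i \<le> row_sum_norm A + row_sum_norm B"
    using abs_row_sum_le_row_sum_norm[of A i] abs_row_sum_le_row_sum_norm[of B i] by linarith
qed

lemma row_sum_norm_scaleR: "row_sum_norm (a *\<^sub>R A) = \<bar>a\<bar> * row_sum_norm A"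
proof -
  have row: "abs_row_sum (a *\<^sub>R A) i = \<bar>a\<bar> * abs_row_sum A i" for i
    by (simp add: abs_row_sum_def sum_distrib_left)
  show ?thesis
  proof (rule antisym)
    show "row_sum_norm (a *\<^sub>R A) \<le> \<bar>a\<bar> * row_sum_norm A"
      by (rule row_sum_norm_le) (simp add: row mult_left_mono abs_row_sum_le_row_sum_norm)
    obtain i where "row_sum_norm A = abs_row_sum A i" using row_sum_norm_attained by blast
    then show "\<bar>a\<bar> * row_sum_norm A \<le> row_sum_norm (a *\<^sub>R A)"
      using abs_row_sum_le_row_sum_norm[of "a *\<^sub>R A" i] row by simp
  qed
qed

lemma row_sum_norm_mult: "row_sum_norm (A ** B) \<le> row_sum_norm A * row_sum_norm B"
proof (rule row_sum_norm_le)
  fix i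
  have "abs_row_sum (A ** B) i = (\<Sum>j\<in>UNIV. cmod (\<Sum>k\<in>UNIV. A$i$k * B$k$j))"
    by (simp add: abs_row_sum_def matrix_matrix_mult_def)
  also have "\<dots> \<le> (\<Sum>j\<in>UNIV. \<Sum>k\<in>UNIV. cmod (A$i$k) * cmod (B$k$j))"
    by (intro sum_mono) (metis (no_types, lifting) norm_mult norm_sum sum.cong)
  also have "\<dots> = (\<Sum>k\<in>UNIV. cmod (A$i$k) * abs_row_sum B k)"
    by (subst sum.swap) (simp add: abs_row_sum_def sum_distrib_left)
  also have "\<dots> \<le> (\<Sum>k\<in>UNIV. cmod (A$i$k) * row_sum_norm B)"
    by (intro sum_mono mult_left_mono abs_row_sum_le_row_sum_norm) auto
  also have "\<dots> = abs_row_sum A i * row_sum_norm B"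
    by (simp add: abs_row_sum_def sum_distrib_right)
  also have "\<dots> \<le> row_sum_norm A * row_sum_norm B"
    by (intro mult_right_mono abs_row_sum_le_row_sum_norm row_sum_norm_nonneg)
  finally show "abs_row_sum (A ** B) i \<le> row_sum_norm A * row_sum_norm B" .
qed

lemma row_sum_norm_one: "row_sum_norm (mat 1 :: complex^'n^'n::finite) = 1"
proof -
  have "abs_row_sum (mat 1 :: complex^'n^'n) i = (\<Sum>j\<in>UNIV. if j = i then 1 else 0)" for i
    unfolding abs_row_sum_def by (intro sum.cong) (auto simp: mat_def)
  then show ?thesis unfolding row_sum_norm_def by simp
qed

lemma row_sum_norm_le_sum_entries:
  "row_sum_norm (A::complex^'n^'n::finite) \<le> (\<Sum>i\<in>UNIV. \<Sum>j\<in>UNIV. cmod (A$i$j))"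
proof (rule row_sum_norm_le)
  fix i
  show "abs_row_sum A i \<le> (\<Sum>i\<in>UNIV. \<Sum>j\<in>UNIV. cmod (A$i$j))"
    unfolding abs_row_sum_def by (intro member_le_sum) (auto intro: sum_nonneg)
qed

lemma sum_entries_le_row_sum_norm:
  "(\<Sum>i\<in>UNIV. \<Sum>j\<in>UNIV. cmod (A$i$j)) \<le> real CARD('n) * row_sum_norm (A::complex^'n^'n::finite)"
proof -
  have "(\<Sum>i\<in>UNIV. \<Sum>j\<in>UNIV. cmod (A$i$j)) = (\<Sum>i\<in>UNIV. abs_row_sum A i)"
    by (simp add: abs_row_sum_def)
  also have "\<dots> \<le> (\<Sum>i\<in>(UNIV::'n set). row_sum_norm A)"
    by (intro sum_mono abs_row_sum_le_row_sum_norm)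
  finally show ?thesis by simp
qed

lemma scaleR_matrix_mult_left: "(a *\<^sub>R A) ** (B::complex^'n^'n) = a *\<^sub>R (A ** B)"
  by (simp add: vec_eq_iff matrix_matrix_mult_def scaleR_sum_right)

lemma scaleR_matrix_mult_right: "A ** (a *\<^sub>R B) = a *\<^sub>R (A ** (B::complex^'n^'n))"
  by (simp add: vec_eq_iff matrix_matrix_mult_def scaleR_sum_right)

lemma matrix_add_rdistrib: "(B + C) ** A = B ** A + C ** (A::'a::semiring_1^'n^'n)"
  by (vector matrix_matrix_mult_def sum.distrib[symmetric] field_simps)

instantiation cmat :: (finite) real_normed_algebra_1
begin

lift_definition zero_cmat :: "'a cmat" is 0 .
lift_definition one_cmat :: "'a cmat" is "mat 1" .
lift_definition plus_cmat :: "'a cmat \<Rightarrow> 'a cmat \<Rightarrow> 'a cmat" is "(+)" .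
lift_definition minus_cmat :: "'a cmat \<Rightarrow> 'a cmat \<Rightarrow> 'a cmat" is "(-)" .
lift_definition uminus_cmat :: "'a cmat \<Rightarrow> 'a cmat" is uminus .
lift_definition times_cmat :: "'a cmat \<Rightarrow> 'a cmat \<Rightarrow> 'a cmat" is "(**)" .
lift_definition scaleR_cmat :: "real \<Rightarrow> 'a cmat \<Rightarrow> 'a cmat" is scaleR .
lift_definition norm_cmat :: "'a cmat \<Rightarrow> real" is row_sum_norm .

definition dist_cmat :: "'a cmat \<Rightarrow> 'a cmat \<Rightarrow> real" where
  "dist_cmat a b = norm (a - b)"
definition sgn_cmat :: "'a cmat \<Rightarrow> 'a cmat" where
  "sgn_cmat x = inverse (norm x) *\<^sub>R x"
definition uniformity_cmat :: "('a cmat \<times> 'a cmat) filter" where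
  "uniformity_cmat = (INF e\<in>{0<..}. principal {(x, y). dist x y < e})"
definition open_cmat :: "'a cmat set \<Rightarrow> bool" where
  "open_cmat S = (\<forall>x\<in>S. \<forall>\<^sub>F (x', y) in uniformity. x' = x \<longrightarrow> y \<in> S)"

instance
proof
  fix a b c :: "'a cmat" and r q :: real and U :: "'a cmat set"
  show "dist a b = norm (a - b)" by (simp add: dist_cmat_def)
  show "sgn a = inverse (norm a) *\<^sub>R a" by (simp add: sgn_cmat_def)
  show "uniformity = (INF e\<in>{0<..}. principal {(x, y::'a cmat). dist x y < e})"
    by (simp add: uniformity_cmat_def)
  show "open U = (\<forall>x\<in>U. \<forall>\<^sub>F (x', y) in uniformity. x' = x \<longrightarrow> y \<in> U)"
    by (simp add: open_cmat_def)
  show "a + b + c = a + (b + c)" by transfer (simp add: add.assoc)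
  show "a + b = b + a" by transfer (simp add: add.commute)
  show "0 + a = a" by transfer simp
  show "- a + a = 0" by transfer simp
  show "a - b = a + - b" by transfer simp
  show "r *\<^sub>R (a + b) = r *\<^sub>R a + r *\<^sub>R b" by transfer (simp add: scaleR_right_distrib)
  show "(r + q) *\<^sub>R a = r *\<^sub>R a + q *\<^sub>R a" by transfer (simp add: scaleR_left_distrib)
  show "r *\<^sub>R q *\<^sub>R a = (r * q) *\<^sub>R a" by transfer simp
  show "1 *\<^sub>R a = a" by transfer simp
  show "a * b * c = a * (b * c)" by transfer (simp add: matrix_mul_assoc)
  show "(a + b) * c = a * c + b * c" by transfer (simp add: matrix_add_rdistrib)
  show "a * (b + c) = a * b + a * c" by transfer (simp add: matrix_add_ldistrib)
  show "1 * a = a" by transfer simp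
  show "a * 1 = a" by transfer simp
  show "(0::'a cmat) \<noteq> 1" by transfer (simp add: vec_eq_iff mat_def)
  show "r *\<^sub>R a * b = r *\<^sub>R (a * b)" by transfer (simp add: scaleR_matrix_mult_left)
  show "a * r *\<^sub>R b = r *\<^sub>R (a * b)" by transfer (simp add: scaleR_matrix_mult_right)
  show "(norm a = 0) = (a = 0)" by transfer (simp add: row_sum_norm_eq_0)
  show "norm (a + b) \<le> norm a + norm b" by transfer (simp add: row_sum_norm_triangle)
  show "norm (r *\<^sub>R a) = \<bar>r\<bar> * norm a" by transfer (simp add: row_sum_norm_scaleR)
  show "norm (a * b) \<le> norm a * norm b" by transfer (simp add: row_sum_norm_mult)
  show "norm (1::'a cmat) = 1" by transfer (simp add: row_sum_norm_one)
qed

end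

lemma norm_cmat_eq: "norm A = row_sum_norm (Rep_cmat A)"
  by transfer simp

lemma entry_le_norm_cmat: "cmod (Rep_cmat A $ i $ j) \<le> norm A"
  by (simp add: norm_cmat_eq entry_le_row_sum_norm)

lemma Rep_cmat_zero: "Rep_cmat 0 = 0" by transfer simp
lemma Rep_cmat_one: "Rep_cmat 1 = mat 1" by transfer simp
lemma Rep_cmat_add: "Rep_cmat (A + B) = Rep_cmat A + Rep_cmat B" by transfer simp
lemma Rep_cmat_diff: "Rep_cmat (A - B) = Rep_cmat A - Rep_cmat B" by transfer simp
lemma Rep_cmat_mult: "Rep_cmat (A * B) = Rep_cmat A ** Rep_cmat B" by transfer simp
lemma Rep_cmat_scaleR: "Rep_cmat (r *\<^sub>R A) = r *\<^sub>R Rep_cmat A" by transfer simp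

lemma Rep_Abs_cmat [simp]: "Rep_cmat (Abs_cmat x) = x"
  by (simp add: Abs_cmat_inverse)

lemma Abs_cmat_zero: "Abs_cmat 0 = 0" by (metis Rep_cmat_inverse Rep_cmat_zero)
lemma Abs_cmat_one: "Abs_cmat (mat 1) = 1" by (metis Rep_cmat_inverse Rep_cmat_one)
lemma Abs_cmat_add: "Abs_cmat (x + y) = Abs_cmat x + Abs_cmat y"
  by (metis Rep_Abs_cmat Rep_cmat_add Rep_cmat_inverse)
lemma Abs_cmat_diff: "Abs_cmat (x - y) = Abs_cmat x - Abs_cmat y"
  by (metis Rep_Abs_cmat Rep_cmat_diff Rep_cmat_inverse)
lemma Abs_cmat_mult: "Abs_cmat (x ** y) = Abs_cmat x * Abs_cmat y"
  by (metis Rep_Abs_cmat Rep_cmat_mult Rep_cmat_inverse)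
lemma Abs_cmat_scaleR: "Abs_cmat (r *\<^sub>R x) = r *\<^sub>R Abs_cmat x"
  by (metis Rep_Abs_cmat Rep_cmat_scaleR Rep_cmat_inverse)
lemma Abs_cmat_sum: "Abs_cmat (\<Sum>x\<in>F. f x) = (\<Sum>x\<in>F. Abs_cmat (f x))"
  by (induction F rule: infinite_finite_induct) (simp_all add: Abs_cmat_zero Abs_cmat_add)

instance cmat :: (finite) banach
proof
  fix X :: "nat \<Rightarrow> 'a cmat"
  assume C: "Cauchy X"
  have "Cauchy (\<lambda>n. Rep_cmat (X n) $ i $ j)" for i j
  proof (rule CauchyI)
    fix e :: real assume "0 < e"
    from CauchyD[OF C this] obtain M where M: "\<And>m n. m \<ge> M \<Longrightarrow> n \<ge> M \<Longrightarrow> norm (X m - X n) < e"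
      by auto
    show "\<exists>M. \<forall>m\<ge>M. \<forall>n\<ge>M. norm (Rep_cmat (X m) $ i $ j - Rep_cmat (X n) $ i $ j) < e"
      using M entry_le_norm_cmat[of "X _ - X _" i j]
      by (metis Rep_cmat_diff order_le_less_trans vector_minus_component)
  qed
  then have "\<exists>l. (\<lambda>n. Rep_cmat (X n) $ i $ j) \<longlonglongrightarrow> l" for i j
    using Cauchy_convergent_iff convergent_def by blast
  then obtain l where l: "\<And>i j. (\<lambda>n. Rep_cmat (X n) $ i $ j) \<longlonglongrightarrow> l i j" by metis
  define L where "L = Abs_cmat (\<chi> i j. l i j)"
  have "(\<lambda>n. X n - L) \<longlonglongrightarrow> 0"
  proof (rule Lim_null_comparison)
    show "\<forall>\<^sub>F n in sequentially.
        norm (X n - L) \<le> (\<Sum>i\<in>UNIV. \<Sum>j\<in>UNIV. cmod (Rep_cmat (X n) $ i $ j - l i j))"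
      using row_sum_norm_le_sum_entries[of "Rep_cmat (X _) - (\<chi> i j. l i j)"]
      by (intro always_eventually allI) (simp add: norm_cmat_eq Rep_cmat_diff L_def)
    have "(\<lambda>n. \<Sum>i\<in>UNIV. \<Sum>j\<in>UNIV. cmod (Rep_cmat (X n) $ i $ j - l i j))
        \<longlonglongrightarrow> (\<Sum>i\<in>(UNIV::'a set). \<Sum>j\<in>(UNIV::'a set). 0)"
      by (intro tendsto_sum tendsto_norm_zero) (use l LIM_zero in blast)
    then show "(\<lambda>n. \<Sum>i\<in>UNIV. \<Sum>j\<in>UNIV. cmod (Rep_cmat (X n) $ i $ j - l i j)) \<longlonglongrightarrow> 0"
      by simp
  qed
  then show "convergent X" by (auto simp: convergent_def LIM_zero_iff)
qed

lemma norm_vec_le_sum: "norm (x::'b::real_normed_vector^'m::finite) \<le> (\<Sum>i\<in>UNIV. norm (x$i))"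
  unfolding norm_vec_def by (rule L2_set_le_sum) simp

lemma bounded_linear_Rep_cmat: "bounded_linear (Rep_cmat :: 'n::finite cmat \<Rightarrow> _)"
proof (rule bounded_linear_intro[where K="real CARD('n)"])
  fix x y :: "'n cmat" and r
  show "Rep_cmat (x + y) = Rep_cmat x + Rep_cmat y" by (rule Rep_cmat_add)
  show "Rep_cmat (r *\<^sub>R x) = r *\<^sub>R Rep_cmat x" by (rule Rep_cmat_scaleR)
  have "norm (Rep_cmat x) \<le> (\<Sum>i\<in>UNIV. norm (Rep_cmat x $ i))" by (rule norm_vec_le_sum)
  also have "\<dots> \<le> (\<Sum>i\<in>UNIV. \<Sum>j\<in>UNIV. cmod (Rep_cmat x $ i $ j))"
    by (intro sum_mono norm_vec_le_sum)
  also have "\<dots> \<le> real CARD('n) * row_sum_norm (Rep_cmat x)"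
    by (rule sum_entries_le_row_sum_norm)
  finally show "norm (Rep_cmat x) \<le> norm x * real CARD('n)"
    by (simp add: norm_cmat_eq mult.commute)
qed

lemma bounded_linear_Abs_cmat: "bounded_linear (Abs_cmat :: complex^'n^'n \<Rightarrow> 'n::finite cmat)"
proof (rule bounded_linear_intro[where K="real CARD('n) * real CARD('n)"])
  fix x y :: "complex^'n^'n" and r
  show "Abs_cmat (x + y) = (Abs_cmat x + Abs_cmat y :: 'n cmat)" by (rule Abs_cmat_add)
  show "Abs_cmat (r *\<^sub>R x) = (r *\<^sub>R Abs_cmat x :: 'n cmat)" by (rule Abs_cmat_scaleR)
  have "norm (Abs_cmat x :: 'n cmat) \<le> (\<Sum>i\<in>UNIV. \<Sum>j\<in>UNIV. cmod (x$i$j))"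
    unfolding norm_cmat_eq by (simp add: row_sum_norm_le_sum_entries)
  also have "\<dots> \<le> (\<Sum>i\<in>(UNIV::'n set). \<Sum>j\<in>(UNIV::'n set). norm x)"
  proof (intro sum_mono)
    fix i j
    have "cmod (x$i$j) \<le> norm (x$i)" by (rule Finite_Cartesian_Product.norm_nth_le)
    also have "\<dots> \<le> norm x" by (rule Finite_Cartesian_Product.norm_nth_le)
    finally show "cmod (x$i$j) \<le> norm x" .
  qed
  finally show "norm (Abs_cmat x :: 'n cmat) \<le> norm x * (real CARD('n) * real CARD('n))"
    by (simp add: mult_ac)
qed

lemma matpow_Rep_cmat: "matpow (Rep_cmat A) k = Rep_cmat (A ^ k)"
  by (induction k) (simp_all add: Rep_cmat_one Rep_cmat_mult)

lemma mexp_Rep_cmat: "mexp (Rep_cmat A) = Rep_cmat (exp A)"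
proof -
  have "Rep_cmat (exp A) = (\<Sum>n. Rep_cmat (A^n /\<^sub>R fact n))"
    unfolding exp_def by (rule bounded_linear.suminf[OF bounded_linear_Rep_cmat summable_exp_generic])
  also have "\<dots> = mexp (Rep_cmat A)"
    unfolding mexp_def by (simp add: Rep_cmat_scaleR matpow_Rep_cmat divide_inverse_commute)
  finally show ?thesis by simp
qed

lemma mexp_eq_exp_cmat: "mexp X = Rep_cmat (exp (Abs_cmat X))"
  using mexp_Rep_cmat[of "Abs_cmat X"] by simp

lemma matrix_inv_mult:
  assumes "invertible (A::'a::semiring_1^'n^'n)"
  shows "A ** matrix_inv A = mat 1" "matrix_inv A ** A = mat 1"
proof -
  have "\<exists>A'. A ** A' = mat 1 \<and> A' ** A = mat 1" using assms unfolding invertible_def by blast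
  then have "A ** matrix_inv A = mat 1 \<and> matrix_inv A ** A = mat 1"
    unfolding matrix_inv_def by (rule someI_ex)
  then show "A ** matrix_inv A = mat 1" "matrix_inv A ** A = mat 1" by auto
qed

lemma matrix_inv_Rep_cmat:
  assumes "c * d = 1" "d * c = 1"
  shows "matrix_inv (Rep_cmat c) = Rep_cmat d"
proof -
  have cd: "Rep_cmat c ** Rep_cmat d = mat 1" "Rep_cmat d ** Rep_cmat c = mat 1"
    using assms by (metis Rep_cmat_mult Rep_cmat_one)+
  then have inv: "invertible (Rep_cmat c)" unfolding invertible_def by blast
  have "matrix_inv (Rep_cmat c) = matrix_inv (Rep_cmat c) ** (Rep_cmat c ** Rep_cmat d)"
    by (simp add: cd)
  also have "\<dots> = Rep_cmat d" by (simp add: matrix_mul_assoc matrix_inv_mult[OF inv])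
  finally show ?thesis .
qed

lift_definition ctrans :: "'n::finite cmat \<Rightarrow> 'n cmat" is "\<lambda>A. \<chi> i j. cnj (A$j$i)" .

lift_definition mtrace :: "'n::finite cmat \<Rightarrow> complex" is trace .

lemma ctrans_mult: "ctrans (a * b) = ctrans b * ctrans a"
  by transfer (simp add: vec_eq_iff matrix_matrix_mult_def mult.commute)
lemma ctrans_ctrans [simp]: "ctrans (ctrans a) = a" by transfer (simp add: vec_eq_iff)
lemma ctrans_one [simp]: "ctrans 1 = 1" by transfer (simp add: vec_eq_iff mat_def)
lemma ctrans_zero [simp]: "ctrans 0 = 0" by transfer (simp add: vec_eq_iff)
lemma ctrans_add: "ctrans (a + b) = ctrans a + ctrans b" by transfer (simp add: vec_eq_iff)
lemma ctrans_diff: "ctrans (a - b) = ctrans a - ctrans b" by transfer (simp add: vec_eq_iff)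
lemma ctrans_uminus: "ctrans (- a) = - ctrans a" by transfer (simp add: vec_eq_iff)
lemma ctrans_scaleR: "ctrans (r *\<^sub>R a) = r *\<^sub>R ctrans a" by transfer (simp add: vec_eq_iff)

lemma ctrans_power: "ctrans (a ^ n) = ctrans a ^ n"
  by (induction n) (simp_all add: ctrans_mult power_commutes)

lemma mtrace_add: "mtrace (a + b) = mtrace a + mtrace b" by transfer (rule trace_add)
lemma mtrace_diff: "mtrace (a - b) = mtrace a - mtrace b" by transfer (rule trace_sub)
lemma mtrace_scaleR: "mtrace (r *\<^sub>R a) = r *\<^sub>R mtrace a"
  by transfer (simp add: trace_def scaleR_sum_right)
lemma mtrace_commute: "mtrace (a * b) = mtrace (b * a)" by transfer (rule trace_mul_sym)
lemma mtrace_ctrans: "mtrace (ctrans a) = cnj (mtrace a)" by transfer (simp add: trace_def)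
lemma mtrace_zero [simp]: "mtrace 0 = 0" by transfer (simp add: trace_def)
lemma mtrace_sum: "mtrace (\<Sum>x\<in>F. f x) = (\<Sum>x\<in>F. mtrace (f x))"
  by (induction F rule: infinite_finite_induct) (simp_all add: mtrace_add)

lemma Re_mtrace_ctrans_self:
  "Re (mtrace (ctrans Y * Y)) = (\<Sum>i\<in>UNIV. \<Sum>j\<in>UNIV. (cmod (Rep_cmat Y $ j $ i))\<^sup>2)"
proof -
  have "mtrace (ctrans Y * Y) = (\<Sum>i\<in>UNIV. \<Sum>j\<in>UNIV. cnj (Rep_cmat Y $ j $ i) * Rep_cmat Y $ j $ i)"
    by (simp add: mtrace.rep_eq trace_def Rep_cmat_mult ctrans.rep_eq matrix_matrix_mult_def)
  then show ?thesis
    by (simp add: Re_sum complex_mult_cnj cmod_power2 power2_eq_square[symmetric])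
qed

lemma Re_mtrace_ctrans_self_nonneg: "0 \<le> Re (mtrace (ctrans Y * Y))"
  unfolding Re_mtrace_ctrans_self by (intro sum_nonneg) auto

lemma Re_mtrace_ctrans_self_eq_0: "Re (mtrace (ctrans Y * Y)) = 0 \<Longrightarrow> Y = 0"
proof -
  assume "Re (mtrace (ctrans Y * Y)) = 0"
  then have "\<forall>i\<in>UNIV. (\<Sum>j\<in>UNIV. (cmod (Rep_cmat Y $ j $ i))\<^sup>2) = 0"
    unfolding Re_mtrace_ctrans_self
    by (subst (asm) sum_nonneg_eq_0_iff) (auto intro: sum_nonneg)
  then have "\<forall>i j. (cmod (Rep_cmat Y $ j $ i))\<^sup>2 = 0"
    by (subst (asm) sum_nonneg_eq_0_iff) auto
  then have "Rep_cmat Y = 0" by (simp add: vec_eq_iff)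
  then show "Y = 0" by (metis Rep_cmat_inverse Rep_cmat_zero)
qed

lemma bounded_linear_ctrans: "bounded_linear (ctrans :: 'n::finite cmat \<Rightarrow> _)"
proof (rule bounded_linear_intro[where K="real CARD('n)"])
  fix x y :: "'n cmat" and r
  show "ctrans (x + y) = ctrans x + ctrans y" by (rule ctrans_add)
  show "ctrans (r *\<^sub>R x) = r *\<^sub>R ctrans x" by (rule ctrans_scaleR)
  have "row_sum_norm (Rep_cmat (ctrans x)) \<le> (\<Sum>i\<in>UNIV. \<Sum>j\<in>UNIV. cmod (Rep_cmat (ctrans x) $ i $ j))"
    by (rule row_sum_norm_le_sum_entries)
  also have "\<dots> = (\<Sum>i\<in>UNIV. \<Sum>j\<in>UNIV. cmod (Rep_cmat x $ i $ j))"
    by (simp add: ctrans.rep_eq, subst sum.swap, simp)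
  also have "\<dots> \<le> real CARD('n) * row_sum_norm (Rep_cmat x)"
    by (rule sum_entries_le_row_sum_norm)
  finally show "norm (ctrans x) \<le> norm x * real CARD('n)"
    by (simp add: norm_cmat_eq mult.commute)
qed

lemma ctrans_exp: "ctrans (exp a) = exp (ctrans a)"
proof -
  have "ctrans (exp a) = (\<Sum>n. ctrans (a^n /\<^sub>R fact n))"
    unfolding exp_def by (rule bounded_linear.suminf[OF bounded_linear_ctrans summable_exp_generic])
  then show ?thesis by (simp add: exp_def ctrans_scaleR ctrans_power)
qed

lemma exp_intertwine:
  fixes A B P :: "'a::{real_normed_algebra_1,banach}"
  assumes "A * P = P * B"
  shows "exp A * P = P * exp B"
proof -
  have power: "A ^ n * P = P * B ^ n" for n
  proof (induction n)
    case (Suc n)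
    have "A ^ Suc n * P = A * (A ^ n * P)" by (simp add: mult.assoc)
    also have "\<dots> = (A * P) * B ^ n" by (simp add: Suc mult.assoc)
    also have "\<dots> = P * B ^ Suc n" by (simp add: assms mult.assoc power_commutes)
    finally show ?case .
  qed simp
  have "exp A * P = (\<Sum>n. A^n /\<^sub>R fact n * P)"
    unfolding exp_def by (rule suminf_mult2[OF summable_exp_generic])
  also have "\<dots> = (\<Sum>n. P * (B^n /\<^sub>R fact n))"
    by (simp add: power)
  also have "\<dots> = P * exp B"
    unfolding exp_def by (rule suminf_mult[OF summable_exp_generic])
  finally show ?thesis .
qed

lemma exp_conjugate:
  fixes C c c' :: "'a::{real_normed_algebra_1,banach}"
  assumes "c * c' = 1" "c' * c = 1"
  shows "exp (c' * C * c) = c' * exp C * c"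
proof -
  have "(c' * C * c) * c' = c' * C" by (simp add: mult.assoc assms)
  then have "exp (c' * C * c) * c' = c' * exp C" by (rule exp_intertwine)
  then have "exp (c' * C * c) * c' * c = c' * exp C * c" by simp
  then show ?thesis by (simp add: mult.assoc assms)
qed

lemma exp_power_eq_exp_scaleR: "exp (x::'a::{real_normed_algebra_1,banach}) ^ n = exp (real n *\<^sub>R x)"
proof (induction n)
  case (Suc n)
  have "exp (real (Suc n) *\<^sub>R x) = exp (x + real n *\<^sub>R x)" by (simp add: algebra_simps)
  also have "\<dots> = exp x * exp (real n *\<^sub>R x)"
    by (rule exp_add_commuting) (simp add: mult_scaleR_right mult_scaleR_left)
  finally show ?case by (simp add: Suc)
qed simp

section \<open>Self-adjoint matrices for a positive Hermitian form\<close>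

lemma has_vector_derivative_zero_of_return:
  fixes f :: "real \<Rightarrow> 'a::real_normed_vector"
  assumes d: "(f has_vector_derivative D) (at 0)"
    and return: "\<And>n. f (h n) = f 0" and h0: "h \<longlonglongrightarrow> 0" and hpos: "\<And>n. h n > 0"
  shows "D = 0"
proof -
  have "(\<lambda>y. norm (f (0 + y) - f 0 - y *\<^sub>R D) / norm y) \<midarrow>0\<rightarrow> 0"
    using d unfolding has_vector_derivative_def has_derivative_at by simp
  moreover have "filterlim h (at 0) sequentially"
    by (rule filterlim_atI[OF h0])
      (use hpos in \<open>auto intro!: always_eventually simp: less_imp_neq[symmetric]\<close>)
  ultimately have "(\<lambda>n. norm (f (0 + h n) - f 0 - h n *\<^sub>R D) / norm (h n)) \<longlonglongrightarrow> 0"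
    by (rule filterlim_compose)
  moreover have "norm (f (0 + h n) - f 0 - h n *\<^sub>R D) / norm (h n) = norm D" for n
    using hpos[of n] by (simp add: return)
  ultimately have "(\<lambda>n. norm D) \<longlonglongrightarrow> 0" by simp
  then show ?thesis by (simp add: LIMSEQ_const_iff)
qed

lemma selfadjoint_funpow:
  fixes b :: "'a \<Rightarrow> 'a \<Rightarrow> real"
  assumes "\<And>x y. b (W x) y = b x (W y)"
  shows "b ((W^^i) x) ((W^^j) y) = b ((W^^(i+j)) x) y"
proof (induction j arbitrary: i)
  case (Suc j)
  have "b ((W^^i) x) ((W^^Suc j) y) = b (W ((W^^i) x)) ((W^^j) y)" by (simp add: assms)
  also have "\<dots> = b ((W^^(Suc i + j)) x) y" using Suc[of "Suc i"] by simp
  finally show ?case by simp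
qed simp

text \<open>With a k = b (W^k v) v, positivity of b gives a (i + j) \<le> (a (2 i) + a (2 j)) / 2; as a is
  4-periodic this forces a 2 = a 0, and then b (W^2 v - v) (W^2 v - v) = a 4 - 2 a 2 + a 0 = 0.\<close>

lemma selfadjoint_funpow_four_fixed_imp_two:
  fixes b :: "'a::ab_group_add \<Rightarrow> 'a \<Rightarrow> real"
  assumes expand: "\<And>x y. b (x - y) (x - y) = b x x - 2 * b x y + b y y"
    and pos: "\<And>x. b x x \<ge> 0" and definite: "\<And>x. b x x = 0 \<Longrightarrow> x = 0"
    and selfadjoint: "\<And>x y. b (W x) y = b x (W y)"
    and fixed4: "(W^^4) v = v"
  shows "(W^^2) v = v"
proof -
  have midpoint: "b x y \<le> (b x x + b y y) / 2" for x y
    using pos[of "x - y"] expand[of x y] by (simp add: field_simps)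
  define a where "a k = b ((W^^k) v) v" for k
  have b_eq_a: "b ((W^^i) v) ((W^^j) v) = a (i+j)" for i j
    using selfadjoint_funpow[of b W, OF selfadjoint] by (simp add: a_def)
  have a4: "a 4 = a 0" by (simp add: a_def fixed4)
  have a6: "a 6 = a 2"
  proof -
    have "(W^^(2+4)) v = (W^^2) ((W^^4) v)" by (simp only: funpow_add o_apply)
    then show ?thesis by (simp add: a_def fixed4)
  qed
  have "a 2 \<le> (a 4 + a 0) / 2"
    using midpoint[of "(W^^2) v" "(W^^0) v"] b_eq_a[of 2 2] b_eq_a[of 0 0] b_eq_a[of 2 0] by simp
  then have le1: "a 2 \<le> a 0" using a4 by simp
  have "a 4 \<le> (a 2 + a 6) / 2"
    using midpoint[of "(W^^1) v" "(W^^3) v"] b_eq_a[of 1 1] b_eq_a[of 3 3] b_eq_a[of 1 3]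
    by (simp add: numeral_2_eq_2)
  then have le2: "a 0 \<le> a 2" using a4 a6 by simp
  have "b ((W^^2) v - v) ((W^^2) v - v) = a 4 - 2 * a 2 + a 0"
    using expand[of "(W^^2) v" v] b_eq_a[of 2 2] b_eq_a[of 2 0] b_eq_a[of 0 0] by simp
  also have "\<dots> = 0" using a4 le1 le2 by simp
  finally have "(W^^2) v - v = 0" by (rule definite)
  then show ?thesis by simp
qed

text \<open>The matrices A with A H = H A^* are those self-adjoint for the
  inner product y^* G x on column vectors, and form_inner is the corresponding Hilbert-Schmidt inner
  product on matrices.\<close>

locale hermitian_form =
  fixes H G :: "'n::finite cmat"
  assumes HG: "H * G = 1" and GH: "G * H = 1" and ctrans_H: "ctrans H = H"
    and pos: "\<And>M. 0 \<le> Re (mtrace (ctrans M * G * M * H))"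
    and definite: "\<And>M. Re (mtrace (ctrans M * G * M * H)) = 0 \<Longrightarrow> M = 0"
begin

definition selfadj :: "'n cmat \<Rightarrow> bool" where
  "selfadj A \<longleftrightarrow> A * H = H * ctrans A"

definition form_inner :: "'n cmat \<Rightarrow> 'n cmat \<Rightarrow> real" where
  "form_inner M N = Re (mtrace (ctrans N * G * M * H))"

lemma ctrans_G: "ctrans G = G"
proof -
  have "H * ctrans G = 1" using arg_cong[OF GH, of ctrans] by (simp add: ctrans_mult ctrans_H)
  then have "G * (H * ctrans G) = G" by simp
  then show ?thesis by (simp add: mult.assoc[symmetric] GH)
qed

lemma selfadj_scaleR: "selfadj A \<Longrightarrow> selfadj (r *\<^sub>R A)"
  by (simp add: selfadj_def ctrans_scaleR)

lemma selfadj_uminus: "selfadj A \<Longrightarrow> selfadj (- A)"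
  by (simp add: selfadj_def ctrans_uminus)

lemma selfadj_exp: "selfadj A \<Longrightarrow> exp A * H = H * ctrans (exp A)"
  unfolding selfadj_def ctrans_exp by (rule exp_intertwine)

lemma selfadj_exp_G: assumes "selfadj A" shows "G * exp A = ctrans (exp A) * G"
proof -
  have "G * (exp A * H) * G = G * (H * ctrans (exp A)) * G" using selfadj_exp[OF assms] by simp
  then show ?thesis by (simp add: mult.assoc GH HG) (simp add: mult.assoc[symmetric] GH)
qed

lemma form_inner_commute: "form_inner M N = form_inner N M"
proof -
  have "cnj (mtrace (ctrans M * G * N * H)) = mtrace (H * ctrans N * G * M)"
    by (simp add: mtrace_ctrans[symmetric] ctrans_mult ctrans_G ctrans_H mult.assoc)
  also have "\<dots> = mtrace (ctrans N * G * M * H)"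
    by (subst mtrace_commute) (simp add: mult.assoc)
  finally have "mtrace (ctrans N * G * M * H) = cnj (mtrace (ctrans M * G * N * H))" by simp
  then show ?thesis by (simp add: form_inner_def)
qed

lemma form_inner_diff_self:
  "form_inner (x - y) (x - y) = form_inner x x - 2 * form_inner x y + form_inner y y"
proof -
  have "form_inner (x - y) (x - y) = form_inner x x - form_inner x y - form_inner y x + form_inner y y"
    by (simp add: form_inner_def ctrans_diff algebra_simps mtrace_diff mtrace_add)
  then show ?thesis using form_inner_commute[of y x] by simp
qed

text \<open>The map M \<mapsto> p M q with p = e^(P/4), q = e^(-Q/4) is self-adjoint for form_inner and fixes 1
  after four steps, hence after two.\<close>

lemma exp_selfadjoint_half:
  assumes "selfadj P" and "selfadj Q" and "exp P * exp (- Q) = 1"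
  shows "exp ((1/2) *\<^sub>R P) * exp (- ((1/2) *\<^sub>R Q)) = 1"
proof -
  define p where "p = exp ((1/4) *\<^sub>R P)"
  define q where "q = exp ((1/4) *\<^sub>R (- Q))"
  have p: "G * p = ctrans p * G"
    unfolding p_def by (rule selfadj_exp_G[OF selfadj_scaleR[OF assms(1)]])
  have q: "q * H = H * ctrans q"
    unfolding q_def by (rule selfadj_exp[OF selfadj_scaleR[OF selfadj_uminus[OF assms(2)]]])
  define W where "W M = p * M * q" for M
  have W_funpow: "(W^^k) M = p^k * M * q^k" for k M
    by (induction k) (simp_all add: W_def mult.assoc power_commutes)
  have W_selfadjoint: "form_inner (W M) N = form_inner M (W N)" for M N
  proof -
    have "ctrans N * G * (p * M * q) * H = ctrans N * (G * p) * M * (q * H)" by (simp add: mult.assoc)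
    also have "\<dots> = (ctrans N * ctrans p * G * M * H) * ctrans q" by (simp add: p q mult.assoc)
    finally have "mtrace (ctrans N * G * (p * M * q) * H)
        = mtrace (ctrans q * (ctrans N * ctrans p * G * M * H))"
      by (simp add: mtrace_commute)
    then show ?thesis by (simp add: form_inner_def W_def ctrans_mult mult.assoc)
  qed
  have "p ^ 4 = exp P" "q ^ 4 = exp (- Q)"
    unfolding p_def q_def exp_power_eq_exp_scaleR by simp_all
  then have "(W^^4) 1 = 1" using assms(3) by (simp add: W_funpow)
  then have "(W^^2) 1 = 1"
  proof (rule selfadjoint_funpow_four_fixed_imp_two[of form_inner, rotated -1])
    show "form_inner (x - y) (x - y) = form_inner x x - 2 * form_inner x y + form_inner y y" for x y
      by (rule form_inner_diff_self)
    show "0 \<le> form_inner x x" for x unfolding form_inner_def by (rule pos)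
    show "form_inner x x = 0 \<Longrightarrow> x = 0" for x unfolding form_inner_def by (rule definite)
  qed (rule W_selfadjoint)
  moreover have "p ^ 2 = exp ((1/2) *\<^sub>R P)" "q ^ 2 = exp (- ((1/2) *\<^sub>R Q))"
    unfolding p_def q_def exp_power_eq_exp_scaleR by simp_all
  ultimately show ?thesis by (simp only: W_funpow mult_1_right)
qed

text \<open>The curve t \<mapsto> e^(t P) e^(-t Q) has derivative P - Q at 0 and returns to 1 at every
  t = 2^-n.\<close>

lemma exp_selfadjoint_inj:
  assumes "selfadj P" and "selfadj Q" and "exp P = exp Q"
  shows "P = Q"
proof -
  have half: "exp (((1/2)^n) *\<^sub>R P) * exp (- (((1/2)^n) *\<^sub>R Q)) = 1" for n
  proof (induction n)
    case 0
    then show ?case using assms(3) exp_minus_inverse[of Q] by simp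
  next
    case (Suc n)
    from exp_selfadjoint_half[OF selfadj_scaleR[OF assms(1)] selfadj_scaleR[OF assms(2)] Suc]
    show ?case by simp
  qed
  define f where "f t = exp (t *\<^sub>R P) * exp (t *\<^sub>R (- Q))" for t :: real
  have "(f has_vector_derivative
      (exp (0 *\<^sub>R P) * (exp (0 *\<^sub>R (- Q)) * (- Q)) + exp (0 *\<^sub>R P) * P * exp (0 *\<^sub>R (- Q)))) (at 0)"
    unfolding f_def by (intro has_vector_derivative_mult exp_scaleR_has_vector_derivative_right)
  then have "(f has_vector_derivative (P - Q)) (at 0)" by simp
  then have "P - Q = 0"
  proof (rule has_vector_derivative_zero_of_return)
    show "f ((1/2)^n) = f 0" for n using half[of n] by (simp add: f_def)
    show "(\<lambda>n. (1/2::real)^n) \<longlonglongrightarrow> 0" by (rule LIMSEQ_power_zero) simp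
  qed simp
  then show ?thesis by simp
qed

end

section \<open>Uniqueness of the polar decomposition\<close>

lemma mult_right_eq_self_imp_one:
  fixes a b z :: "'a::monoid_mult"
  assumes "a * z = a" and "b * a = 1"
  shows "z = 1"
proof -
  have "z = b * (a * z)" by (simp add: mult.assoc[symmetric] assms(2))
  then show ?thesis by (simp add: assms)
qed

definition i_mat :: "'n::finite cmat" where
  "i_mat = Abs_cmat (mat \<i>)"

lemma i_mat_commute: "i_mat * A = A * i_mat"
  unfolding i_mat_def by transfer
    (simp add: vec_eq_iff matrix_matrix_mult_def mat_def if_distrib if_distribR sum.delta' cong: if_cong)

lemma ctrans_i_mat: "ctrans i_mat = - i_mat"
  unfolding i_mat_def by transfer (simp add: vec_eq_iff mat_def)

locale unitary_group = hermitian_form H G for H G :: "'n::finite cmat" +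
  fixes K :: "'n cmat set"
  assumes mult_K: "\<And>a b. a \<in> K \<Longrightarrow> b \<in> K \<Longrightarrow> a * b \<in> K"
    and inverse_K: "\<And>a. a \<in> K \<Longrightarrow> \<exists>b\<in>K. a * b = 1 \<and> b * a = 1"
    and unitary: "\<And>k. k \<in> K \<Longrightarrow> k * H * ctrans k = H"
begin

lemma H_ctrans_unitary:
  assumes "k \<in> K" and "k * k' = 1" "k' * k = 1"
  shows "H * ctrans k = k' * H"
proof -
  have "k' * (k * H * ctrans k) = k' * H" using unitary[OF assms(1)] by simp
  then show ?thesis by (simp add: mult.assoc[symmetric] assms(3))
qed

lemma Lie_skew:
  assumes "\<And>t. exp (t *\<^sub>R X) \<in> K"
  shows "X * H + H * ctrans X = 0"
proof -
  define f where "f t = exp (t *\<^sub>R X) * H * ctrans (exp (t *\<^sub>R X))" for t :: real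
  have "f = (\<lambda>t. H)" using unitary[OF assms] by (simp add: f_def fun_eq_iff)
  then have const_deriv: "(f has_vector_derivative 0) (at 0)" by simp
  have "(f has_vector_derivative
      (exp (0 *\<^sub>R X) * H * ctrans (exp (0 *\<^sub>R X) * X)
        + (exp (0 *\<^sub>R X) * 0 + exp (0 *\<^sub>R X) * X * H) * ctrans (exp (0 *\<^sub>R X)))) (at 0)"
    unfolding f_def
    by (intro has_vector_derivative_mult exp_scaleR_has_vector_derivative_right
        has_vector_derivative_const bounded_linear.has_vector_derivative[OF bounded_linear_ctrans])
  then have "(f has_vector_derivative (H * ctrans X + X * H)) (at 0)" by (simp add: ctrans_mult)
  from vector_derivative_unique_at[OF this const_deriv] show ?thesis by (simp add: add.commute)
qed

lemma Lie_selfadj: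
  assumes "\<And>t. exp (t *\<^sub>R X) \<in> K"
  shows "selfadj (i_mat * X)"
proof -
  have X: "X * H = - (H * ctrans X)" using Lie_skew[OF assms] by (simp add: add_eq_0_iff)
  have "i_mat * X * H = - (i_mat * H * ctrans X)" by (simp add: mult.assoc X)
  also have "\<dots> = H * ctrans (i_mat * X)"
    by (simp add: ctrans_mult ctrans_i_mat i_mat_commute[of H] mult.assoc i_mat_commute[of "ctrans X", symmetric])
  finally show ?thesis by (simp add: selfadj_def)
qed

lemma selfadj_conjugate:
  assumes "selfadj B" and "k \<in> K" "k' \<in> K" "k * k' = 1" "k' * k = 1"
  shows "selfadj (k * B * k')"
proof -
  have "k * B * k' * H = k * B * (H * ctrans k)"
    by (simp add: H_ctrans_unitary[OF assms(2,4,5)] mult.assoc)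
  also have "\<dots> = k * (B * H) * ctrans k" by (simp add: mult.assoc)
  also have "\<dots> = (k * H) * ctrans B * ctrans k"
    by (simp add: selfadj_def[of B, THEN iffD1, OF assms(1)] mult.assoc)
  also have "\<dots> = H * ctrans (k * B * k')"
    by (simp add: H_ctrans_unitary[OF assms(3,5,4), symmetric] ctrans_mult mult.assoc)
  finally show ?thesis by (simp add: selfadj_def)
qed

text \<open>From exp A = k exp B, comparing exp A H (exp A)^* with k exp B H (exp B)^* k^* gives
  exp (2 A) = k exp (2 B) k^-1 = exp (2 k B k^-1), so A = k B k^-1 by injectivity of exp on
  self-adjoint matrices, and then k = 1.\<close>

lemma polar_unit_unique:
  assumes k: "k \<in> K" and X: "\<And>t. exp (t *\<^sub>R X) \<in> K" and Y: "\<And>t. exp (t *\<^sub>R Y) \<in> K"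
    and polar: "exp (i_mat * X) = k * exp (i_mat * Y)"
  shows "k = 1"
proof -
  define A B where "A = i_mat * X" and "B = i_mat * Y"
  have A: "selfadj A" and B: "selfadj B"
    unfolding A_def B_def by (rule Lie_selfadj[OF X], rule Lie_selfadj[OF Y])
  obtain k' where k': "k' \<in> K" "k * k' = 1" "k' * k = 1" using inverse_K[OF k] by blast
  have square: "exp A ^ 2 = k * exp B ^ 2 * k'"
  proof -
    have "exp A ^ 2 * H = exp A * (exp A * H)" by (simp add: power2_eq_square mult.assoc)
    also have "\<dots> = exp A * H * ctrans (exp A)" by (metis selfadj_exp[OF A] mult.assoc)
    also have "\<dots> = k * (exp B * H * ctrans (exp B)) * ctrans k"
      using polar by (simp add: A_def B_def ctrans_mult mult.assoc)
    also have "\<dots> = k * exp B ^ 2 * k' * H"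
      by (simp add: power2_eq_square mult.assoc selfadj_exp[OF B, symmetric]
          H_ctrans_unitary[OF k k'(2,3)])
    finally have "exp A ^ 2 * H * G = k * exp B ^ 2 * k' * H * G" by simp
    then show ?thesis by (simp add: mult.assoc HG)
  qed
  have kBk': "selfadj (k * B * k')" by (rule selfadj_conjugate[OF B k k'])
  have "exp (real 2 *\<^sub>R A) = exp (real 2 *\<^sub>R (k * B * k'))"
    using square exp_conjugate[OF k'(3,2), of "real 2 *\<^sub>R B"]
      exp_power_eq_exp_scaleR[of A 2] exp_power_eq_exp_scaleR[of B 2]
    by (simp add: mult_scaleR_left mult_scaleR_right del: of_nat_numeral)
  then have "real 2 *\<^sub>R A = real 2 *\<^sub>R (k * B * k')"
    by (rule exp_selfadjoint_inj[OF selfadj_scaleR[OF A] selfadj_scaleR[OF kBk']])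
  then have conjugated: "k * exp B * k' = k * exp B"
    using polar exp_conjugate[OF k'(3,2), of B] by (simp add: A_def B_def)
  have "(exp (- B) * k') * (k * exp B) = exp (- B) * (k' * k) * exp B" by (simp add: mult.assoc)
  then have "(exp (- B) * k') * (k * exp B) = 1" using exp_minus_inverse[of "- B"] by (simp add: k'(3))
  with conjugated have "k' = 1" by (rule mult_right_eq_self_imp_one)
  then show ?thesis using k'(2) by simp
qed

text \<open>With u = kh^-1 u' kt the hypothesis says (f^-1 u) exp (i Xt) = exp (i f^-1 Xh f), so
  f^-1 u = 1 by uniqueness of the polar decomposition.\<close>

lemma polar_cancel:
  assumes kh: "kh \<in> K" and kt: "kt \<in> K" and f: "f \<in> K" and u': "u' \<in> K"
    and Xh: "\<And>t. exp (t *\<^sub>R Xh) \<in> K" and Xt: "\<And>t. exp (t *\<^sub>R Xt) \<in> K"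
    and eq: "u' * (kt * exp (i_mat * Xt)) = kh * exp (i_mat * Xh) * f"
  shows "u' * kt = kh * f"
proof -
  obtain kh' where kh': "kh' \<in> K" "kh * kh' = 1" "kh' * kh = 1" using inverse_K[OF kh] by blast
  obtain f' where f': "f' \<in> K" "f * f' = 1" "f' * f = 1" using inverse_K[OF f] by blast
  define u where "u = kh' * u' * kt"
  have "u * exp (i_mat * Xt) = kh' * (u' * (kt * exp (i_mat * Xt)))" by (simp add: u_def mult.assoc)
  also have "\<dots> = (kh' * kh) * exp (i_mat * Xh) * f" by (simp only: eq mult.assoc)
  also have "\<dots> = exp (i_mat * Xh) * f" by (simp add: kh')
  finally have u: "u * exp (i_mat * Xt) = exp (i_mat * Xh) * f" .
  define X' where "X' = f' * Xh * f"
  have X': "exp (t *\<^sub>R X') \<in> K" for t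
  proof -
    have "exp (t *\<^sub>R X') = f' * exp (t *\<^sub>R Xh) * f"
      unfolding X'_def using exp_conjugate[OF f'(2,3), of "t *\<^sub>R Xh"]
      by (simp add: mult_scaleR_left mult_scaleR_right)
    then show ?thesis by (simp add: mult_K f f' Xh)
  qed
  have "exp (i_mat * X') = f' * exp (i_mat * Xh) * f"
    using exp_conjugate[OF f'(2,3), of "i_mat * Xh"]
    by (simp add: X'_def mult.assoc[symmetric] i_mat_commute[of f'])
  also have "\<dots> = (f' * u) * exp (i_mat * Xt)" by (simp add: mult.assoc u)
  finally have "f' * u = 1" by (rule polar_unit_unique[OF mult_K[OF f'(1)] X' Xt, rotated])
      (simp add: u_def mult_K kh' u' kt)
  then have "f * (f' * u) = f" by simp
  then have "u = f" by (simp add: mult.assoc[symmetric] f'(2))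
  have "kh * u = (kh * kh') * u' * kt" by (simp only: u_def mult.assoc)
  also have "\<dots> = u' * kt" by (simp add: kh')
  finally show ?thesis using \<open>u = f\<close> by simp
qed

end

section \<open>An invariant Hermitian form for a compact matrix group\<close>

definition cong_act :: "complex^'n^'n \<Rightarrow> complex^'n^'n \<Rightarrow> complex^'n^'n::finite" where
  "cong_act k M = Rep_cmat (Abs_cmat k * Abs_cmat M * ctrans (Abs_cmat k))"

lemma cong_act_add: "cong_act k (M + M') = cong_act k M + cong_act k M'"
  by (simp add: cong_act_def Abs_cmat_add algebra_simps Rep_cmat_add)

lemma cong_act_diff: "cong_act k (M - M') = cong_act k M - cong_act k M'"
  by (simp add: cong_act_def Abs_cmat_diff algebra_simps Rep_cmat_diff)

lemma cong_act_scaleR: "cong_act k (r *\<^sub>R M) = r *\<^sub>R cong_act k M"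
  by (simp add: cong_act_def Abs_cmat_scaleR Rep_cmat_scaleR mult_scaleR_left mult_scaleR_right)

lemma cong_act_zero: "cong_act k 0 = 0"
  using cong_act_scaleR[of k 0 0] by simp

lemma linear_cong_act: "linear (cong_act k)"
  by (rule linearI) (simp_all add: cong_act_add cong_act_scaleR)

lemma cong_act_cong_act: "cong_act j (cong_act k M) = cong_act (j ** k) M"
  by (simp add: cong_act_def Abs_cmat_mult ctrans_mult mult.assoc Rep_cmat_inverse)

lemma cong_act_one: "cong_act (mat 1) M = M"
  by (simp add: cong_act_def Abs_cmat_one Rep_cmat_inverse)

lemma continuous_on_cong_act: "continuous_on S (\<lambda>k. cong_act k M)"
  unfolding cong_act_def
  by (intro bounded_linear.continuous_on[OF bounded_linear_Rep_cmat] continuous_on_mult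
      bounded_linear.continuous_on[OF bounded_linear_Abs_cmat] continuous_on_id continuous_on_const
      bounded_linear.continuous_on[OF bounded_linear_ctrans])

lemma norm_mult3_le: "norm (a * b * c) \<le> norm a * norm b * norm (c::'a::real_normed_algebra)"
  by (metis mult_right_mono norm_ge_zero norm_mult_ineq order_trans)

locale compact_group =
  fixes K :: "(complex^'n::finite^'n) set"
  assumes compact_matrix_group: "compact_matrix_group K"
begin

lemma compact_K: "compact K"
  and one_K: "mat 1 \<in> K"
  and invertible_K: "k \<in> K \<Longrightarrow> invertible k"
  and matrix_inv_K: "k \<in> K \<Longrightarrow> matrix_inv k \<in> K"
  and mult_K: "k \<in> K \<Longrightarrow> j \<in> K \<Longrightarrow> k ** j \<in> K"
  using compact_matrix_group unfolding compact_matrix_group_def by auto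

lemma left_inverse_K: "k \<in> K \<Longrightarrow> \<exists>k'\<in>K. k' ** k = mat 1"
  using matrix_inv_K invertible_K matrix_inv_mult by blast

lemma norm_cong_act_bound: "\<exists>C\<ge>0. \<forall>k\<in>K. \<forall>M. norm (cong_act k M) \<le> C * norm M"
proof -
  obtain cR where cR: "cR > 0" "\<And>x::'n cmat. norm (Rep_cmat x) \<le> norm x * cR"
    using bounded_linear.pos_bounded[OF bounded_linear_Rep_cmat] by blast
  obtain cA where cA: "cA > 0" "\<And>x::complex^'n^'n. norm (Abs_cmat x :: 'n cmat) \<le> norm x * cA"
    using bounded_linear.pos_bounded[OF bounded_linear_Abs_cmat] by blast
  obtain cT where cT: "cT > 0" "\<And>x::'n cmat. norm (ctrans x) \<le> norm x * cT"
    using bounded_linear.pos_bounded[OF bounded_linear_ctrans] by blast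
  obtain b where b: "\<And>k. k \<in> K \<Longrightarrow> norm k \<le> b"
    using compact_imp_bounded[OF compact_K] unfolding bounded_iff by blast
  have b0: "0 \<le> b" using b[OF one_K] norm_ge_zero order_trans by blast
  have bound: "norm (cong_act k M) \<le> (cR * (b * cA) * cA * ((b * cA) * cT)) * norm M"
    if k: "k \<in> K" for k M
  proof -
    have nk: "norm (Abs_cmat k :: 'n cmat) \<le> b * cA"
      using cA(2)[of k] b[OF k] cA(1) by (meson mult_right_mono less_imp_le order_trans)
    have nkT: "norm (ctrans (Abs_cmat k :: 'n cmat)) \<le> (b * cA) * cT"
      using cT(2)[of "Abs_cmat k"] nk cT(1) by (meson mult_right_mono less_imp_le order_trans)
    have "norm (cong_act k M) \<le> norm (Abs_cmat k * Abs_cmat M * ctrans (Abs_cmat k :: 'n cmat)) * cR"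
      unfolding cong_act_def by (rule cR(2))
    also have "\<dots> \<le> norm (Abs_cmat k :: 'n cmat) * norm (Abs_cmat M :: 'n cmat)
        * norm (ctrans (Abs_cmat k :: 'n cmat)) * cR"
      by (intro mult_right_mono norm_mult3_le) (use cR in simp)
    also have "\<dots> \<le> ((b * cA) * (norm M * cA) * ((b * cA) * cT)) * cR"
      using nk nkT cA(2)[of M] cR(1) cA(1) b0
      by (intro mult_right_mono mult_mono) (auto simp: less_imp_le)
    finally show ?thesis by (simp add: mult_ac)
  qed
  have "0 \<le> cR * (b * cA) * cA * ((b * cA) * cT)"
    using cR(1) cA(1) cT(1) b0 by simp
  then show ?thesis using bound by blast
qed

definition orbit_norm :: "complex^'n^'n \<Rightarrow> real" where
  "orbit_norm M = Sup ((\<lambda>k. norm (cong_act k M)) ` K)"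

lemma norm_cong_act_le_orbit_norm: "k \<in> K \<Longrightarrow> norm (cong_act k M) \<le> orbit_norm M"
proof -
  obtain C where "\<forall>k\<in>K. norm (cong_act k M) \<le> C * norm M"
    using norm_cong_act_bound by blast
  then have "bdd_above ((\<lambda>k. norm (cong_act k M)) ` K)" by (auto intro!: bdd_aboveI2)
  then show "k \<in> K \<Longrightarrow> ?thesis" unfolding orbit_norm_def by (auto intro: cSup_upper)
qed

lemma orbit_norm_le: "(\<And>k. k \<in> K \<Longrightarrow> norm (cong_act k M) \<le> c) \<Longrightarrow> orbit_norm M \<le> c"
  unfolding orbit_norm_def using one_K by (auto intro: cSup_least)

lemma orbit_norm_attained: "\<exists>k\<in>K. orbit_norm M = norm (cong_act k M)"
proof -
  have "continuous_on K (\<lambda>k. norm (cong_act k M))"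
    by (intro continuous_on_norm continuous_on_cong_act)
  moreover have "K \<noteq> {}" using one_K by blast
  ultimately obtain k where
    "k \<in> K" "\<And>j. j \<in> K \<Longrightarrow> norm (cong_act j M) \<le> norm (cong_act k M)"
    using continuous_attains_sup[OF compact_K] by blast
  then show ?thesis
    using norm_cong_act_le_orbit_norm[of k M] orbit_norm_le[of M "norm (cong_act k M)"]
    by (intro bexI[of _ k]) auto
qed

lemma continuous_on_orbit_norm: "continuous_on S orbit_norm"
proof -
  obtain C where C: "0 \<le> C" "\<forall>k\<in>K. \<forall>M. norm (cong_act k M) \<le> C * norm M"
    using norm_cong_act_bound by blast
  have lip: "orbit_norm M \<le> orbit_norm M' + C * norm (M - M')" for M M'
  proof (rule orbit_norm_le)
    fix k assume k: "k \<in> K"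
    have "norm (cong_act k M) \<le> norm (cong_act k M') + norm (cong_act k (M - M'))"
      using norm_triangle_ineq[of "cong_act k M'" "cong_act k (M - M')"] by (simp add: cong_act_diff)
    also have "\<dots> \<le> orbit_norm M' + C * norm (M - M')"
      using norm_cong_act_le_orbit_norm[OF k] C(2) k by (intro add_mono) auto
    finally show "norm (cong_act k M) \<le> orbit_norm M' + C * norm (M - M')" .
  qed
  have "C-lipschitz_on S orbit_norm"
  proof (rule lipschitz_onI)
    fix x y
    have "orbit_norm x - orbit_norm y \<le> C * norm (x - y)" "orbit_norm y - orbit_norm x \<le> C * norm (x - y)"
      using lip[of x y] lip[of y x] by (auto simp: norm_minus_commute)
    then show "dist (orbit_norm x) (orbit_norm y) \<le> C * dist x y"
      by (simp add: dist_real_def dist_norm abs_le_iff)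
  qed (rule C(1))
  then show ?thesis by (rule lipschitz_on_continuous_on)
qed

lemma orbit_norm_cong_act: "j \<in> K \<Longrightarrow> orbit_norm (cong_act j M) = orbit_norm M"
proof (rule antisym)
  assume j: "j \<in> K"
  show "orbit_norm (cong_act j M) \<le> orbit_norm M"
    by (rule orbit_norm_le) (simp add: cong_act_cong_act norm_cong_act_le_orbit_norm mult_K j)
  obtain j' where j': "j' \<in> K" "j' ** j = mat 1" using left_inverse_K[OF j] by blast
  show "orbit_norm M \<le> orbit_norm (cong_act j M)"
  proof (rule orbit_norm_le)
    fix k assume k: "k \<in> K"
    have "cong_act k M = cong_act (k ** j') (cong_act j M)"
      by (simp add: cong_act_cong_act matrix_mul_assoc[symmetric] j'(2))
    then show "norm (cong_act k M) \<le> orbit_norm (cong_act j M)"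
      using norm_cong_act_le_orbit_norm mult_K[OF k j'(1)] by simp
  qed
qed

text \<open>Strict convexity of orbit_norm, via the parallelogram law at a point of the orbit realising
  the norm of the midpoint.\<close>

lemma orbit_norm_midpoint_eq:
  assumes "orbit_norm A \<le> m" and "orbit_norm B \<le> m" and "m \<le> orbit_norm ((1/2) *\<^sub>R (A + B))"
  shows "A = B"
proof -
  obtain k where k: "k \<in> K" "orbit_norm ((1/2) *\<^sub>R (A + B)) = norm (cong_act k ((1/2) *\<^sub>R (A + B)))"
    using orbit_norm_attained by blast
  define x y where "x = cong_act k A" and "y = cong_act k B"
  have nx: "norm x \<le> m" and ny: "norm y \<le> m"
    using norm_cong_act_le_orbit_norm[OF k(1)] assms(1,2) unfolding x_def y_def by (meson order_trans)+
  have m0: "0 \<le> m" using nx norm_ge_zero order_trans by blast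
  have "cong_act k ((1/2) *\<^sub>R (A + B)) = (1/2) *\<^sub>R (x + y)"
    by (simp add: x_def y_def cong_act_add cong_act_scaleR)
  then have "m \<le> norm ((1/2) *\<^sub>R (x + y))" using assms(3) k(2) by simp
  then have "m\<^sup>2 \<le> (norm ((1/2) *\<^sub>R (x + y)))\<^sup>2" using m0 by (rule power_mono)
  also have "\<dots> = (1/4) * (norm (x + y))\<^sup>2" by (simp add: power_mult_distrib power2_eq_square)
  also have "\<dots> = (1/4) * (2 * (norm x)\<^sup>2 + 2 * (norm y)\<^sup>2 - (norm (x - y))\<^sup>2)"
    by (simp add: power2_norm_eq_inner inner_add inner_diff inner_commute algebra_simps)
  also have "\<dots> \<le> (1/4) * (4 * m\<^sup>2 - (norm (x - y))\<^sup>2)"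
    using power_mono[OF nx norm_ge_zero, of 2] power_mono[OF ny norm_ge_zero, of 2] by simp
  finally have "(norm (x - y))\<^sup>2 \<le> 0" by simp
  then have zero: "cong_act k (A - B) = 0" by (simp add: x_def y_def cong_act_diff)
  obtain k' where k': "k' ** k = mat 1" using left_inverse_K[OF k(1)] by blast
  have "A - B = cong_act k' (cong_act k (A - B))" by (simp add: cong_act_cong_act k' cong_act_one)
  then show ?thesis by (simp add: zero cong_act_zero)
qed

lemma invariant_in_convex_hull:
  "\<exists>H\<in>convex hull ((\<lambda>k. cong_act k (mat 1)) ` K). \<forall>j\<in>K. cong_act j H = H"
proof -
  define S where "S = convex hull ((\<lambda>k. cong_act k (mat 1)) ` K)"
  have "compact S"
    unfolding S_def by (intro compact_convex_hull compact_continuous_image continuous_on_cong_act compact_K)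
  moreover have "S \<noteq> {}" using one_K by (auto simp: S_def)
  ultimately obtain H where H: "H \<in> S" "\<And>M. M \<in> S \<Longrightarrow> orbit_norm H \<le> orbit_norm M"
    by (metis continuous_attains_inf continuous_on_orbit_norm)
  have S_invariant: "cong_act j M \<in> S" if j: "j \<in> K" and M: "M \<in> S" for j M
  proof -
    have "cong_act j ` ((\<lambda>k. cong_act k (mat 1)) ` K) \<subseteq> (\<lambda>k. cong_act k (mat 1)) ` K"
      using mult_K[OF j] by (auto simp: cong_act_cong_act)
    then have "convex hull (cong_act j ` ((\<lambda>k. cong_act k (mat 1)) ` K)) \<subseteq> S"
      unfolding S_def by (rule hull_mono)
    then show ?thesis
      using M unfolding S_def convex_hull_linear_image[OF linear_cong_act, symmetric] by blast
  qed
  have "convex S" unfolding S_def by simp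
  have "cong_act j H = H" if j: "j \<in> K" for j
  proof (rule orbit_norm_midpoint_eq)
    show "orbit_norm (cong_act j H) \<le> orbit_norm H" by (simp add: orbit_norm_cong_act j)
    have "(1/2) *\<^sub>R (cong_act j H + H) \<in> S"
      using convexD[OF \<open>convex S\<close> S_invariant[OF j H(1)] H(1), of "1/2" "1/2"]
      by (simp add: scaleR_add_right)
    then show "orbit_norm H \<le> orbit_norm ((1/2) *\<^sub>R (cong_act j H + H))" by (rule H(2))
  qed simp
  then show ?thesis using H(1) unfolding S_def by blast
qed

end

locale gram_combination =
  fixes H :: "'n::finite cmat" and F :: "'x set" and u :: "'x \<Rightarrow> real" and a :: "'x \<Rightarrow> 'n cmat"
  assumes finite_F: "finite F" and H_eq: "H = (\<Sum>x\<in>F. u x *\<^sub>R (a x * ctrans (a x)))"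
    and nonneg: "\<And>x. x \<in> F \<Longrightarrow> 0 \<le> u x" and sum_one: "sum u F = 1"
    and invertible: "\<And>x. x \<in> F \<Longrightarrow> \<exists>b. a x * b = 1 \<and> b * a x = 1"
begin

lemma ctrans_H: "ctrans H = H"
proof -
  have "ctrans H = (\<Sum>x\<in>F. ctrans (u x *\<^sub>R (a x * ctrans (a x))))"
    unfolding H_eq by (induction F rule: infinite_finite_induct) (simp_all add: ctrans_add)
  then show ?thesis by (simp add: H_eq ctrans_scaleR ctrans_mult)
qed

lemma positive_weight: obtains x where "x \<in> F" "u x > 0"
proof -
  have "\<exists>x\<in>F. u x > 0"
  proof (rule ccontr)
    assume "\<not> (\<exists>x\<in>F. u x > 0)"
    then have "\<forall>x\<in>F. u x = 0" using nonneg by force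
    then show False using sum_one by simp
  qed
  then show ?thesis using that by blast
qed

lemma Re_mtrace_quadratic:
  "Re (mtrace (ctrans Y * H * Y))
    = (\<Sum>x\<in>F. u x * Re (mtrace (ctrans (ctrans (a x) * Y) * (ctrans (a x) * Y))))"
proof -
  have "ctrans Y * H * Y = (\<Sum>x\<in>F. u x *\<^sub>R (ctrans Y * (a x * ctrans (a x)) * Y))"
    unfolding H_eq by (simp add: sum_distrib_left sum_distrib_right mult_scaleR_left mult_scaleR_right)
  then have "mtrace (ctrans Y * H * Y) = (\<Sum>x\<in>F. u x *\<^sub>R mtrace (ctrans Y * (a x * ctrans (a x)) * Y))"
    by (simp add: mtrace_sum mtrace_scaleR)
  moreover have "ctrans Y * (a x * ctrans (a x)) * Y = ctrans (ctrans (a x) * Y) * (ctrans (a x) * Y)" for x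
    by (simp add: ctrans_mult mult.assoc)
  ultimately show ?thesis by (simp add: Re_sum scaleR_conv_of_real)
qed

lemma Re_mtrace_quadratic_nonneg: "0 \<le> Re (mtrace (ctrans Y * H * Y))"
  unfolding Re_mtrace_quadratic using nonneg
  by (intro sum_nonneg mult_nonneg_nonneg Re_mtrace_ctrans_self_nonneg) auto

lemma Re_mtrace_quadratic_eq_0:
  assumes "Re (mtrace (ctrans Y * H * Y)) = 0"
  shows "Y = 0"
proof -
  obtain x where x: "x \<in> F" "u x > 0" by (rule positive_weight)
  have "\<forall>x\<in>F. u x * Re (mtrace (ctrans (ctrans (a x) * Y) * (ctrans (a x) * Y))) = 0"
    using assms unfolding Re_mtrace_quadratic
    by (subst (asm) sum_nonneg_eq_0_iff)
      (use finite_F nonneg in \<open>auto intro: mult_nonneg_nonneg Re_mtrace_ctrans_self_nonneg\<close>)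
  then have "ctrans (a x) * Y = 0" using x by (auto intro: Re_mtrace_ctrans_self_eq_0)
  moreover obtain b where "a x * b = 1" using invertible[OF x(1)] by blast
  then have "ctrans b * ctrans (a x) = 1" using ctrans_mult[of "a x" b] by simp
  then have "ctrans b * (ctrans (a x) * Y) = Y" by (simp add: mult.assoc[symmetric])
  ultimately show ?thesis by simp
qed

lemma H_mult_eq_0: "H * Y = 0 \<Longrightarrow> Y = 0"
  using Re_mtrace_quadratic_eq_0[of Y] by (simp add: mult.assoc)

lemma H_invertible: obtains G where "H * G = 1" "G * H = 1"
proof -
  have "x = 0" if x: "Rep_cmat H *v x = 0" for x
  proof -
    define Y where "Y = Abs_cmat (\<chi> i j. x $ i)"
    have "Rep_cmat (H * Y) = 0"
      using x by (simp add: Y_def Rep_cmat_mult vec_eq_iff matrix_matrix_mult_def matrix_vector_mult_def)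
    then have "H * Y = 0" by (metis Rep_cmat_inverse Rep_cmat_zero)
    then have "Y = 0" by (rule H_mult_eq_0)
    then have "Rep_cmat Y = 0" by (simp add: Rep_cmat_zero)
    then show "x = 0" by (simp add: Y_def vec_eq_iff)
  qed
  then have "invertible (Rep_cmat H)"
    using matrix_left_invertible_ker invertible_left_inverse by blast
  then obtain A' where "Rep_cmat H ** A' = mat 1" "A' ** Rep_cmat H = mat 1"
    unfolding invertible_def by blast
  then have "H * Abs_cmat A' = 1" "Abs_cmat A' * H = 1"
    by (metis Rep_Abs_cmat Rep_cmat_inverse Rep_cmat_mult Rep_cmat_one)+
  then show ?thesis using that by blast
qed

lemma Re_mtrace_weighted:
  "Re (mtrace (ctrans M * G * M * H)) = (\<Sum>x\<in>F. u x * Re (mtrace (ctrans (M * a x) * G * (M * a x))))"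
proof -
  have "ctrans M * G * M * H = (\<Sum>x\<in>F. u x *\<^sub>R (ctrans M * G * M * (a x * ctrans (a x))))"
    unfolding H_eq by (simp add: sum_distrib_left mult_scaleR_right)
  then have "mtrace (ctrans M * G * M * H)
      = (\<Sum>x\<in>F. u x *\<^sub>R mtrace (ctrans M * G * M * (a x * ctrans (a x))))"
    by (simp add: mtrace_sum mtrace_scaleR)
  moreover have "mtrace (ctrans M * G * M * (a x * ctrans (a x))) = mtrace (ctrans (M * a x) * G * (M * a x))"
    for x
  proof -
    have "mtrace (ctrans M * G * M * (a x * ctrans (a x))) = mtrace ((ctrans M * G * M * a x) * ctrans (a x))"
      by (simp add: mult.assoc)
    also have "\<dots> = mtrace (ctrans (a x) * (ctrans M * G * M * a x))" by (rule mtrace_commute)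
    finally show ?thesis by (simp add: ctrans_mult mult.assoc)
  qed
  ultimately show ?thesis by (simp add: Re_sum scaleR_conv_of_real)
qed

lemma inverse_quadratic:
  assumes HG: "H * G = 1" and GH: "G * H = 1"
  shows "0 \<le> Re (mtrace (ctrans Z * G * Z))"
    and "Re (mtrace (ctrans Z * G * Z)) = 0 \<Longrightarrow> Z = 0"
proof -
  have "H * ctrans G = 1" using arg_cong[OF GH, of ctrans] by (simp add: ctrans_mult ctrans_H)
  then have "G * (H * ctrans G) = G" by simp
  then have ctrans_G: "ctrans G = G" by (simp add: mult.assoc[symmetric] GH)
  have quadratic: "Re (mtrace (ctrans Z * G * Z)) = Re (mtrace (ctrans (G * Z) * H * (G * Z)))"
    by (simp add: ctrans_mult ctrans_G mult.assoc[symmetric] GH) (simp add: mult.assoc HG)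
  show "0 \<le> Re (mtrace (ctrans Z * G * Z))"
    unfolding quadratic by (rule Re_mtrace_quadratic_nonneg)
  assume "Re (mtrace (ctrans Z * G * Z)) = 0"
  then have "G * Z = 0" unfolding quadratic by (rule Re_mtrace_quadratic_eq_0)
  then have "H * (G * Z) = 0" by simp
  then show "Z = 0" by (simp add: mult.assoc[symmetric] HG)
qed

lemma hermitian_form:
  assumes HG: "H * G = 1" and GH: "G * H = 1"
  shows "hermitian_form H G"
proof
  show "H * G = 1" "G * H = 1" by (fact HG) (fact GH)
  show "ctrans H = H" by (rule ctrans_H)
  show "0 \<le> Re (mtrace (ctrans M * G * M * H))" for M
    unfolding Re_mtrace_weighted using nonneg
    by (intro sum_nonneg mult_nonneg_nonneg inverse_quadratic(1)[OF HG GH]) auto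
  show "M = 0" if zero: "Re (mtrace (ctrans M * G * M * H)) = 0" for M
  proof -
    obtain x where x: "x \<in> F" "u x > 0" by (rule positive_weight)
    have "\<forall>x\<in>F. u x * Re (mtrace (ctrans (M * a x) * G * (M * a x))) = 0"
      using zero unfolding Re_mtrace_weighted
      by (subst (asm) sum_nonneg_eq_0_iff)
        (use finite_F nonneg in \<open>auto intro: mult_nonneg_nonneg inverse_quadratic(1)[OF HG GH]\<close>)
    then have "M * a x = 0" using x by (auto intro: inverse_quadratic(2)[OF HG GH])
    moreover obtain b where "a x * b = 1" using invertible[OF x(1)] by blast
    then have "M * a x * b = M" by (simp add: mult.assoc)
    ultimately show ?thesis by simp
  qed
qed

end

context compact_group
begin

lemma Abs_cmat_unit:
  assumes "k \<in> K"
  shows "\<exists>b\<in>Abs_cmat ` K. Abs_cmat k * b = 1 \<and> b * Abs_cmat k = 1"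
  using matrix_inv_mult[OF invertible_K[OF assms]] matrix_inv_K[OF assms]
  by (intro bexI[of _ "Abs_cmat (matrix_inv k)"]) (simp_all add: Abs_cmat_mult[symmetric] Abs_cmat_one)

lemma invariant_gram_combination:
  obtains H F u k where "gram_combination (Abs_cmat H) (F :: (complex^'n^'n) set) u (\<lambda>x. Abs_cmat (k x))"
    and "\<forall>j\<in>K. cong_act j H = H"
proof -
  obtain H where H: "H \<in> convex hull ((\<lambda>k. cong_act k (mat 1)) ` K)" "\<forall>j\<in>K. cong_act j H = H"
    using invariant_in_convex_hull by blast
  obtain F u where F: "finite F" "F \<subseteq> (\<lambda>k. cong_act k (mat 1)) ` K" "\<forall>x\<in>F. 0 \<le> u x"
      "sum u F = 1" "(\<Sum>x\<in>F. u x *\<^sub>R x) = H"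
    using H(1) unfolding convex_hull_explicit by blast
  have "\<forall>x\<in>F. \<exists>k. k \<in> K \<and> x = cong_act k (mat 1)" using F(2) by (auto simp: subset_iff)
  then obtain k where k: "\<forall>x\<in>F. k x \<in> K \<and> x = cong_act (k x) (mat 1)"
    using bchoice[of F] by metis
  have "gram_combination (Abs_cmat H) F u (\<lambda>x. Abs_cmat (k x))"
  proof
    have "Abs_cmat H = (\<Sum>x\<in>F. u x *\<^sub>R Abs_cmat x)"
      by (simp add: F(5)[symmetric] Abs_cmat_sum Abs_cmat_scaleR)
    also have "\<dots> = (\<Sum>x\<in>F. u x *\<^sub>R (Abs_cmat (k x) * ctrans (Abs_cmat (k x))))"
    proof (rule sum.cong)
      fix x assume "x \<in> F"
      then have "Abs_cmat x = Abs_cmat (cong_act (k x) (mat 1))" using k by simp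
      then show "u x *\<^sub>R Abs_cmat x = u x *\<^sub>R (Abs_cmat (k x) * ctrans (Abs_cmat (k x)))"
        by (simp add: cong_act_def Abs_cmat_one Rep_cmat_inverse)
    qed simp
    finally show "Abs_cmat H = (\<Sum>x\<in>F. u x *\<^sub>R (Abs_cmat (k x) * ctrans (Abs_cmat (k x))))" .
    show "\<exists>b. Abs_cmat (k x) * b = 1 \<and> b * Abs_cmat (k x) = 1" if "x \<in> F" for x
      using Abs_cmat_unit k that by blast
  qed (use F in auto)
  then show ?thesis using H(2) by (rule that)
qed

lemma unitary_form_exists:
  obtains H G where "unitary_group H G (Abs_cmat ` K)"
proof -
  obtain H F u k
    where gram: "gram_combination (Abs_cmat H) (F :: (complex^'n^'n) set) u (\<lambda>x. Abs_cmat (k x))"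
    and H: "\<forall>j\<in>K. cong_act j H = H"
    by (rule invariant_gram_combination)
  obtain G where G: "Abs_cmat H * G = 1" "G * Abs_cmat H = 1"
    by (rule gram_combination.H_invertible[OF gram])
  have "unitary_group (Abs_cmat H) G (Abs_cmat ` K)"
  proof (rule unitary_group.intro[OF gram_combination.hermitian_form[OF gram G]], unfold_locales)
    show "a * b \<in> Abs_cmat ` K" if "a \<in> Abs_cmat ` K" "b \<in> Abs_cmat ` K" for a b
      using that mult_K by (auto simp: Abs_cmat_mult[symmetric])
    show "\<exists>b\<in>Abs_cmat ` K. a * b = 1 \<and> b * a = 1" if "a \<in> Abs_cmat ` K" for a
      using that Abs_cmat_unit by blast
    show "a * Abs_cmat H * ctrans a = Abs_cmat H" if a: "a \<in> Abs_cmat ` K" for a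
    proof -
      obtain j where j: "j \<in> K" "a = Abs_cmat j" using a by blast
      have "Abs_cmat (cong_act j H) = Abs_cmat H" using H j(1) by simp
      then show ?thesis by (simp add: cong_act_def j(2) Rep_cmat_inverse)
    qed
  qed
  then show ?thesis by (rule that)
qed

end
section \<open>Gauge equivalence over the complexification\<close>

lemma i_mat_mult_Abs_cmat: "i_mat * Abs_cmat X = Abs_cmat (cscale \<i> X)"
proof -
  have "mat \<i> ** X = cscale \<i> X"
    by (simp add: vec_eq_iff matrix_matrix_mult_def mat_def cscale_def if_distrib if_distribR
        sum.delta' cong: if_cong)
  then show ?thesis unfolding i_mat_def by (simp add: Abs_cmat_mult[symmetric])
qed

lemma exp_lie_alg:
  assumes "X \<in> lie_alg K"
  shows "exp (t *\<^sub>R Abs_cmat X) \<in> Abs_cmat ` K"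
proof -
  have "mexp (t *\<^sub>R X) \<in> K" using assms unfolding lie_alg_def by blast
  moreover have "exp (t *\<^sub>R Abs_cmat X) = Abs_cmat (mexp (t *\<^sub>R X))"
    by (simp add: mexp_eq_exp_cmat Abs_cmat_scaleR Rep_cmat_inverse)
  ultimately show ?thesis by blast
qed

lemma Abs_cmat_mexp_cscale: "Abs_cmat (mexp (cscale \<i> X)) = exp (i_mat * Abs_cmat X)"
  by (simp add: mexp_eq_exp_cmat i_mat_mult_Abs_cmat Rep_cmat_inverse)

lemma Abs_cmat_matrix_inv_mult_mexp:
  assumes "invertible k"
  shows "Abs_cmat (matrix_inv (k ** mexp (cscale \<i> X))) * (Abs_cmat k * exp (i_mat * Abs_cmat X)) = 1"
proof -
  define P D where "P = exp (i_mat * Abs_cmat X)"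
    and "D = exp (- (i_mat * Abs_cmat X)) * Abs_cmat (matrix_inv k)"
  have k_inv: "Abs_cmat k * Abs_cmat (matrix_inv k) = 1" "Abs_cmat (matrix_inv k) * Abs_cmat k = 1"
    using matrix_inv_mult[OF assms] by (simp_all add: Abs_cmat_mult[symmetric] Abs_cmat_one)
  have "(Abs_cmat k * P) * D = Abs_cmat k * (P * exp (- (i_mat * Abs_cmat X))) * Abs_cmat (matrix_inv k)"
    by (simp only: D_def mult.assoc)
  then have right: "(Abs_cmat k * P) * D = 1" by (simp add: P_def exp_minus_inverse k_inv)
  have "D * (Abs_cmat k * P) = exp (- (i_mat * Abs_cmat X)) * (Abs_cmat (matrix_inv k) * Abs_cmat k) * P"
    by (simp only: D_def mult.assoc)
  then have left: "D * (Abs_cmat k * P) = 1"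
    using exp_minus_inverse[of "- (i_mat * Abs_cmat X)"] by (simp add: P_def k_inv)
  have "k ** mexp (cscale \<i> X) = Rep_cmat (Abs_cmat k * P)"
    by (simp add: P_def Abs_cmat_mexp_cscale[symmetric] Abs_cmat_mult[symmetric])
  then have "Abs_cmat (matrix_inv (k ** mexp (cscale \<i> X))) = D"
    using matrix_inv_Rep_cmat[OF right left] by (simp add: Rep_cmat_inverse)
  then show ?thesis using left by (simp add: P_def)
qed

lemma (in compact_group) complexification_arrow_cancel:
  assumes kh: "kh \<in> K" and kt: "kt \<in> K" and f1: "f1 \<in> K" and f2: "f2 \<in> K"
    and Xh: "Xh \<in> lie_alg K" and Xt: "Xt \<in> lie_alg K"
    and eq: "f2 = kh ** mexp (cscale \<i> Xh) ** f1 ** matrix_inv (kt ** mexp (cscale \<i> Xt))"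
  shows "f2 = kh ** f1 ** matrix_inv kt"
proof -
  obtain H G where "unitary_group H G (Abs_cmat ` K)" by (rule unitary_form_exists)
  then interpret unitary_group H G "Abs_cmat ` K" .
  have "Abs_cmat f2 = Abs_cmat kh * exp (i_mat * Abs_cmat Xh) * Abs_cmat f1
      * Abs_cmat (matrix_inv (kt ** mexp (cscale \<i> Xt)))"
    using eq by (simp only: Abs_cmat_mult Abs_cmat_mexp_cscale)
  then have "Abs_cmat f2 * (Abs_cmat kt * exp (i_mat * Abs_cmat Xt))
      = Abs_cmat kh * exp (i_mat * Abs_cmat Xh) * Abs_cmat f1"
    using Abs_cmat_matrix_inv_mult_mexp[OF invertible_K[OF kt]] by (simp add: mult.assoc)
  then have "Abs_cmat f2 * Abs_cmat kt = Abs_cmat kh * Abs_cmat f1"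
    by (rule polar_cancel[OF _ _ _ _ exp_lie_alg[OF Xh] exp_lie_alg[OF Xt], rotated -1])
      (use kh kt f1 f2 in auto)
  then have "Abs_cmat (f2 ** kt ** matrix_inv kt) = Abs_cmat (kh ** f1 ** matrix_inv kt)"
    by (simp only: Abs_cmat_mult)
  then show ?thesis
    using matrix_inv_mult(1)[OF invertible_K[OF kt]] by (metis Rep_Abs_cmat matrix_mul_assoc matrix_mul_rid)
qed

lemma gauge_act_apply:
  "a \<in> QA \<Longrightarrow> gauge_act QA hh tt g f a = g (hh a) ** f a ** matrix_inv (g (tt a))"
  unfolding gauge_act_def by (rule restrict_apply')

lemma gauge_act_eqI:
  assumes "\<And>a. a \<in> QA \<Longrightarrow> f' a = g (hh a) ** f a ** matrix_inv (g (tt a))"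
    and "f' \<in> QA \<rightarrow>\<^sub>E X"
  shows "gauge_act QA hh tt g f = f'"
proof
  fix a
  show "gauge_act QA hh tt g f a = f' a"
    using assms(1) PiE_arb[OF assms(2)] by (cases "a \<in> QA") (simp_all add: gauge_act_def)
qed

lemma (in compact_group) gauge_act_unitary_part:
  assumes "quiver QV QA hh tt" and f1: "f1 \<in> QA \<rightarrow>\<^sub>E K" and f2: "f2 \<in> QA \<rightarrow>\<^sub>E K"
    and g: "g \<in> gauge (complexification K) QV" and g_f1: "gauge_act QA hh tt g f1 = f2"
  obtains k where "k \<in> gauge K QV" "gauge_act QA hh tt k f1 = f2"
proof -
  have "\<forall>v\<in>QV. \<exists>k\<in>K. \<exists>X\<in>lie_alg K. g v = k ** mexp (cscale \<i> X)"
    using g unfolding gauge_def complexification_def by blast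
  then obtain k where k: "\<And>v. v \<in> QV \<Longrightarrow> k v \<in> K \<and> (\<exists>X\<in>lie_alg K. g v = k v ** mexp (cscale \<i> X))"
    by metis
  have "restrict k QV \<in> gauge K QV" using k unfolding gauge_def by auto
  moreover have "gauge_act QA hh tt (restrict k QV) f1 = f2"
  proof (rule gauge_act_eqI[OF _ f2])
    fix a assume a: "a \<in> QA"
    then have ends: "hh a \<in> QV" "tt a \<in> QV" using assms(1) unfolding quiver_def by auto
    obtain Xh Xt where kh: "k (hh a) \<in> K" "Xh \<in> lie_alg K" "g (hh a) = k (hh a) ** mexp (cscale \<i> Xh)"
      and kt: "k (tt a) \<in> K" "Xt \<in> lie_alg K" "g (tt a) = k (tt a) ** mexp (cscale \<i> Xt)"
      using k[OF ends(1)] k[OF ends(2)] by blast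
    have "f2 a = k (hh a) ** mexp (cscale \<i> Xh) ** f1 a ** matrix_inv (k (tt a) ** mexp (cscale \<i> Xt))"
      using gauge_act_apply[OF a, of hh tt g f1] by (simp only: g_f1 kh(3) kt(3))
    then have "f2 a = k (hh a) ** f1 a ** matrix_inv (k (tt a))"
      by (rule complexification_arrow_cancel[OF kh(1) kt(1) PiE_mem[OF f1 a] PiE_mem[OF f2 a] kh(2) kt(2)])
    then show "f2 a = restrict k QV (hh a) ** f1 a ** matrix_inv (restrict k QV (tt a))"
      using ends by simp
  qed
  ultimately show ?thesis by (rule that)
qed

theorem corollary4p6:
  fixes K :: "(complex^'n^'n) set"
    and QV :: "'v set" and QA :: "'e set" and hh tt :: "'e \<Rightarrow> 'v"
    and R :: "'e list set" and f1 f2 :: "'e \<Rightarrow> complex^'n^'n"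
  assumes "compact_matrix_group K"
    and "quiver QV QA hh tt"
    and "finite R" and "\<forall>r\<in>R. is_cycle QA hh tt r"
    and "f1 \<in> reps K QA R" and "f2 \<in> reps K QA R"
    and "\<exists>g\<in>gauge (complexification K) QV. gauge_act QA hh tt g f1 = f2"
  shows "\<exists>g\<in>gauge K QV. gauge_act QA hh tt g f1 = f2"
proof -
  interpret compact_group K by (rule compact_group.intro) (fact assms(1))
  have "f1 \<in> QA \<rightarrow>\<^sub>E K" "f2 \<in> QA \<rightarrow>\<^sub>E K"
    using assms(5,6) unfolding reps_def by auto
  moreover obtain g where "g \<in> gauge (complexification K) QV" "gauge_act QA hh tt g f1 = f2"
    using assms(7) by blast
  ultimately obtain k where "k \<in> gauge K QV" "gauge_act QA hh tt k f1 = f2"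
    by (rule gauge_act_unitary_part[OF assms(2)])
  then show ?thesis by blast
qed

end
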